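(* Fix an integer $k\ge1$ and a real $d>1$. Then every $\lambda\in[0,\lambda_c(d))$ satisfies real block contraction for $k$ and $d$.
   Context: For $x>1$, $\lambda_c(x)=x^x/(x-1)^{x+1}$. For a rooted tree $T$ with root $r$ and $k\ge0$, $C_k(T)=\{v:\mathrm{dist}_T(r,v)=k\}$. A self-avoiding walk (SAW) of length $i$ from $v$ is a walk $v=v_0,\dots,v_i$ with distinct vertices; $\mu_k(T)=\sup_v\mathcal{N}_{\le k}(T,v)^{1/k}$ where $\mathcal{N}_{\le k}(T,v)$ counts SAWs of length $1$ to $k$ from $v$. Block operator: for $\lambda\in\mathbb{R}$, $k\ge1$ and a rooted tree $T$, $\mathcal{F}_{\lambda,T,k}$ maps $\mathbf R\in\mathbb{R}^{C_k(T)}$ (where defined) to a real number as follows: consider the subtree of vertices of depth at most $k$; set $R_u=\mathbf R_u$ for $u\in C_k(T)$, $R_u=\lambda$ for every other leaf $u$, and for each internal vertex $v$ with children $v_1,\dots,v_m$ set $R_v=\lambda\prod_{i=1}^m(1+R_{v_i})^{-1}$, proceeding upward; then $\mathcal{F}_{\lambda,T,k}(\mathbf R)=R_r$. For an injective function $\varphi$, $\mathcal{F}^\varphi_{\lambda,T,k}(\mathbf x)=\varphi(\mathcal{F}_{\lambda,T,k}(\varphi^{-1}(x_u))_{u\in C_k(T)})$. Let $\mathcal{T}$ be the set of rooted trees $T$ of depth at most $k$ with $\mu_k(T)\le d$. We say $\lambda\in\mathbb{R}$ satisfies real block contraction for $k$ and $d$ if there exist a compact real interval $\mathcal{J}$ with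 $\lambda\in\mathcal{J}$ and $-1\notin\mathcal{J}$ and a real-analytic $\varphi:\mathcal{J}\to\mathcal{I}:=\varphi(\mathcal{J})$ with $\varphi'(x)\neq0$ for all $x\in\mathcal{J}$, such that (1) $\mathcal{F}_{\lambda,T,k}(\mathcal{J}^{C_k(T)})\subseteq\mathcal{J}$ for all $T\in\mathcal{T}$, and (2) there is $\eta>0$ with $\|\nabla\mathcal{F}^\varphi_{\lambda,T,k}(\mathbf x)\|_1\le1-\eta$ for all $\mathbf x\in\mathcal{I}^{C_k(T)}$ and all $T\in\mathcal{T}$. *)

theory Defs
  imports "HOL-Analysis.Analysis"
begin

definition lambda_c :: "real \<Rightarrow> real" where
  "lambda_c x = x powr x / (x - 1) powr (x + 1)"

text \<open>Finite rooted trees (ordered children); vertices are addresses (paths from the root).\<close>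
datatype rtree = Node "rtree list"

fun subtree :: "rtree \<Rightarrow> nat list \<Rightarrow> rtree option" where
  "subtree t [] = Some t"
| "subtree (Node ts) (i # p) = (if i < length ts then subtree (ts ! i) p else None)"

definition verts :: "rtree \<Rightarrow> nat list set" where
  "verts T = {p. subtree T p \<noteq> None}"

definition level :: "rtree \<Rightarrow> nat \<Rightarrow> nat list set" where
  "level T k = {p \<in> verts T. length p = k}"

definition tree_depth_le :: "rtree \<Rightarrow> nat \<Rightarrow> bool" where
  "tree_depth_le T k \<longleftrightarrow> (\<forall>p\<in>verts T. length p \<le> k)"

definition adj :: "rtree \<Rightarrow> nat list \<Rightarrow> nat list \<Rightarrow> bool" where
  "adj T u w \<longleftrightarrow> u \<in> verts T \<and> w \<in> verts T \<and> ((\<exists>i. w = u @ [i]) \<or> (\<exists>i. u = w @ [i]))"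

definition is_saw :: "rtree \<Rightarrow> nat list \<Rightarrow> nat \<Rightarrow> nat list list \<Rightarrow> bool" where
  "is_saw T v i ws \<longleftrightarrow> length ws = i + 1 \<and> ws ! 0 = v \<and> v \<in> verts T \<and> distinct ws
      \<and> (\<forall>j<i. adj T (ws ! j) (ws ! (j + 1)))"

definition N_le :: "nat \<Rightarrow> rtree \<Rightarrow> nat list \<Rightarrow> nat" where
  "N_le k T v = card {ws. \<exists>i. 1 \<le> i \<and> i \<le> k \<and> is_saw T v i ws}"

definition mu :: "nat \<Rightarrow> rtree \<Rightarrow> real" where
  "mu k T = (SUP v\<in>verts T. real (N_le k T v) powr (1 / real k))"

text \<open>Block operator: the argument R is read at the depth-k vertices (addresses relative to the root).\<close>
fun blk :: "real \<Rightarrow> nat \<Rightarrow> (nat list \<Rightarrow> real) \<Rightarrow> rtree \<Rightarrow> real" where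
  "blk lam 0 R t = R []"
| "blk lam (Suc j) R (Node ts) =
     (if ts = [] then lam
      else lam * (\<Prod>i<length ts. inverse (1 + blk lam j (\<lambda>p. R (i # p)) (ts ! i))))"

fun blk_defined :: "real \<Rightarrow> nat \<Rightarrow> (nat list \<Rightarrow> real) \<Rightarrow> rtree \<Rightarrow> bool" where
  "blk_defined lam 0 R t = True"
| "blk_defined lam (Suc j) R (Node ts) =
     (\<forall>i<length ts. blk_defined lam j (\<lambda>p. R (i # p)) (ts ! i)
                   \<and> 1 + blk lam j (\<lambda>p. R (i # p)) (ts ! i) \<noteq> 0)"

definition blk_phi :: "real \<Rightarrow> nat \<Rightarrow> (real \<Rightarrow> real) \<Rightarrow> real set \<Rightarrow> (nat list \<Rightarrow> real) \<Rightarrow> rtree \<Rightarrow> real" where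
  "blk_phi lam k \<phi> J x T = \<phi> (blk lam k (\<lambda>u. the_inv_into J \<phi> (x u)) T)"

definition real_analytic_on :: "(real \<Rightarrow> real) \<Rightarrow> real set \<Rightarrow> bool" where
  "real_analytic_on f S \<longleftrightarrow> (\<forall>x\<in>S. \<exists>r>0. \<exists>c::nat \<Rightarrow> real.
      \<forall>y. \<bar>y - x\<bar> < r \<longrightarrow> (\<lambda>n. c n * (y - x) ^ n) sums f y)"

definition tree_class :: "nat \<Rightarrow> real \<Rightarrow> rtree set" where
  "tree_class k d = {T. tree_depth_le T k \<and> mu k T \<le> d}"

definition real_block_contraction :: "real \<Rightarrow> nat \<Rightarrow> real \<Rightarrow> bool" where
  "real_block_contraction lam k d \<longleftrightarrow>
    (\<exists>a b. \<exists>\<phi> :: real \<Rightarrow> real.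
       a \<le> b \<and> lam \<in> {a..b} \<and> -1 \<notin> {a..b} \<and>
       real_analytic_on \<phi> {a..b} \<and> inj_on \<phi> {a..b} \<and> (\<forall>x\<in>{a..b}. deriv \<phi> x \<noteq> 0) \<and>
       (\<forall>T\<in>tree_class k d. \<forall>R. (\<forall>u\<in>level T k. R u \<in> {a..b}) \<longrightarrow>
            blk_defined lam k R T \<and> blk lam k R T \<in> {a..b}) \<and>
       (\<exists>\<eta>>0. \<forall>T\<in>tree_class k d. \<forall>x. (\<forall>u\<in>level T k. x u \<in> \<phi> ` {a..b}) \<longrightarrow>
            (\<exists>D :: nat list \<Rightarrow> real.
               (\<forall>u\<in>level T k. ((\<lambda>t. blk_phi lam k \<phi> {a..b} (x(u := t)) T)
                                  has_real_derivative D u) (at (x u) within \<phi> ` {a..b}))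
               \<and> (\<Sum>u\<in>level T k. \<bar>D u\<bar>) \<le> 1 - \<eta>)))"

end

theory Submission
  imports Defs "HOL-Complex_Analysis.Complex_Analysis"
begin

text \<open>Let \<open>0 < \<lambda> < \<lambda>\<^sub>c(d)\<close>, \<open>a = 2 / ((d - 1) ln (d / (d - 1)))\<close> and \<open>\<phi>(x) = ln (1 + x) ^ (1 - 1 / a)\<close>.
  Since \<open>\<mu>\<^sub>k(T) \<le> d\<close>, a tree of the class has at most \<open>d ^ k\<close> vertices of depth \<open>1..k\<close>, so every vertex
  has at most \<open>M = \<lfloor>d ^ k\<rfloor>\<close> children and the block operator \<open>F\<close> maps \<open>[\<lambda> / (1 + \<lambda>) ^ M, \<lambda>]\<close> into itself.
  In \<open>\<phi>\<close>-coordinates the gradient of \<open>F\<close> has entries \<open>|\<partial>F/\<partial>R\<^sub>u| \<phi>'(F) / \<phi>'(R\<^sub>u)\<close>, whose \<open>a\<close>-th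
  powers add up to the potential \<open>\<Sum>\<^sub>u |\<partial>F/\<partial>R\<^sub>u| ^ a w(R\<^sub>u)\<close> divided by \<open>w(F)\<close>, where
  \<open>w(y) = (1 + y) ^ a ln (1 + y)\<close>. Per level, the potential shrinks by a factor \<open>c d ^ (1 - a)\<close> with
  \<open>c < 1\<close>; this is the inequality \<open>d ^ (a - 1) b ^ a ln (\<lambda>\<^sub>c(d) / b) \<le> w(b)\<close> for \<open>b > 0\<close>, with equality
  at \<open>b = 1 / (d - 1)\<close>. With at most \<open>d ^ k\<close> leaves, the power mean inequality bounds the \<open>\<ell>\<^sup>1\<close>-norm of
  the gradient by \<open>(d ^ (k (a - 1)) (c d ^ (1 - a)) ^ k) ^ (1 / a) = c ^ (k / a) < 1\<close>.
  For \<open>\<lambda> = 0\<close> the operator vanishes identically.\<close>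

section \<open>Trees\<close>

lemma subtree_append:
  "subtree t (p @ q) = (case subtree t p of None \<Rightarrow> None | Some s \<Rightarrow> subtree s q)"
proof (induction p arbitrary: t)
  case (Cons i p)
  obtain ts where "t = Node ts" by (cases t)
  with Cons show ?case by simp
qed simp

lemma verts_appendD: "p @ q \<in> verts t \<Longrightarrow> p \<in> verts t"
  by (auto simp: verts_def subtree_append split: option.splits)

lemma take_in_verts: "q \<in> verts t \<Longrightarrow> take i q \<in> verts t"
  using verts_appendD[of "take i q" "drop i q"] by simp

lemma Nil_in_verts [simp]: "[] \<in> verts t"
  by (simp add: verts_def)

lemma Cons_in_verts_Node: "i # p \<in> verts (Node ts) \<longleftrightarrow> i < length ts \<and> p \<in> verts (ts ! i)"
  by (simp add: verts_def)

lemma verts_Node: "verts (Node ts) = insert [] (\<Union>i<length ts. (#) i ` verts (ts ! i))"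
proof -
  have "p \<in> verts (Node ts) \<longleftrightarrow> p \<in> insert [] (\<Union>i<length ts. (#) i ` verts (ts ! i))" for p
    by (cases p) (auto simp: Cons_in_verts_Node)
  then show ?thesis by blast
qed

lemma finite_verts: "finite (verts t)"
  by (induction t) (simp add: verts_Node)

lemma level_0: "level t 0 = {[]}"
  by (auto simp: level_def)

lemma level_Suc_Node: "level (Node ts) (Suc j) = (\<Union>i<length ts. (#) i ` level (ts ! i) j)"
proof -
  have "p \<in> level (Node ts) (Suc j) \<longleftrightarrow> p \<in> (\<Union>i<length ts. (#) i ` level (ts ! i) j)" for p
    by (cases p) (auto simp: level_def Cons_in_verts_Node)
  then show ?thesis by blast
qed

lemma finite_level: "finite (level t j)"
  using finite_verts[of t] by (simp add: level_def)

lemma sum_level_Suc_Node: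
  "(\<Sum>u\<in>level (Node ts) (Suc j). f u) = (\<Sum>i<length ts. \<Sum>p\<in>level (ts ! i) j. f (i # p))"
proof -
  have "(\<Sum>u\<in>level (Node ts) (Suc j). f u) = (\<Sum>i<length ts. \<Sum>u\<in>(#) i ` level (ts ! i) j. f u)"
    unfolding level_Suc_Node by (rule sum.UNION_disjoint) (auto simp: finite_level)
  also have "\<dots> = (\<Sum>i<length ts. \<Sum>p\<in>level (ts ! i) j. f (i # p))"
    by (rule sum.cong) (auto simp: sum.reindex)
  finally show ?thesis .
qed

fun branching_le :: "nat \<Rightarrow> nat \<Rightarrow> rtree \<Rightarrow> bool" where
  "branching_le M 0 t = True"
| "branching_le M (Suc j) (Node ts) = (length ts \<le> M \<and> (\<forall>i<length ts. branching_le M j (ts ! i)))"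

lemma branching_leI:
  "(\<And>p ts. subtree t p = Some (Node ts) \<Longrightarrow> length p < j \<Longrightarrow> length ts \<le> M) \<Longrightarrow> branching_le M j t"
proof (induction j arbitrary: t)
  case (Suc j)
  obtain ts where t: "t = Node ts" by (cases t)
  have "length ts \<le> M"
    using Suc.prems[of "[]" ts] by (simp add: t)
  moreover have "branching_le M j (ts ! i)" if "i < length ts" for i
  proof (rule Suc.IH)
    fix p ss assume "subtree (ts ! i) p = Some (Node ss)" "length p < j"
    then show "length ss \<le> M"
      using Suc.prems[of "i # p" ss] that by (simp add: t)
  qed
  ultimately show ?case by (simp add: t)
qed simp

section \<open>Counting vertices by self-avoiding walks\<close>

definition descendants :: "rtree \<Rightarrow> nat \<Rightarrow> nat list set" where
  "descendants T k = {q \<in> verts T. 1 \<le> length q \<and> length q \<le> k}"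

lemma finite_descendants: "finite (descendants T k)"
  by (simp add: descendants_def finite_verts)

definition root_path :: "nat list \<Rightarrow> nat list list" where
  "root_path q = map (\<lambda>i. take i q) [0..<Suc (length q)]"

lemma length_root_path: "length (root_path q) = Suc (length q)"
  by (simp add: root_path_def)

lemma nth_root_path: "j \<le> length q \<Longrightarrow> root_path q ! j = take j q"
  by (simp add: root_path_def nth_append del: upt_Suc)

lemma root_path_last: "root_path q ! length q = q"
  by (simp add: nth_root_path)

lemma inj_root_path: "inj root_path"
proof (rule injI)
  fix p q assume eq: "root_path p = root_path q"
  then have "length p = length q"
    using length_root_path[of p] length_root_path[of q] by simp
  then show "p = q"
    using eq root_path_last[of p] root_path_last[of q] by metis
qed

lemma is_saw_root_path:
  assumes q: "q \<in> verts T"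
  shows "is_saw T [] (length q) (root_path q)"
proof -
  have "inj_on (\<lambda>i. take i q) {0..<Suc (length q)}"
    by (rule inj_onI) (metis atLeastLessThan_iff length_take less_Suc_eq_le min.absorb2)
  then have "distinct (root_path q)"
    by (simp add: root_path_def distinct_map del: upt_Suc)
  moreover have "adj T (root_path q ! j) (root_path q ! (j + 1))" if "j < length q" for j
  proof -
    have "root_path q ! j = take j q" "root_path q ! (j + 1) = take j q @ [q ! j]"
      using that by (simp_all add: nth_root_path take_Suc_conv_app_nth)
    then show ?thesis
      using take_in_verts[OF q, of j] take_in_verts[OF q, of "j + 1"] that
      by (auto simp: adj_def take_Suc_conv_app_nth)
  qed
  ultimately show ?thesis
    using q by (simp add: is_saw_def length_root_path nth_root_path)
qed

lemma set_saw_subset_verts: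
  assumes s: "is_saw T v i ws"
  shows "set ws \<subseteq> verts T"
proof -
  have "ws ! j \<in> verts T" if "j \<le> i" for j
    using that
  proof (induction j)
    case 0 then show ?case using s by (simp add: is_saw_def)
  next
    case (Suc j) then show ?case using s by (auto simp: is_saw_def adj_def)
  qed
  then show ?thesis
    using s by (auto simp: is_saw_def in_set_conv_nth)
qed

lemma finite_saws: "finite {ws. \<exists>i. 1 \<le> i \<and> i \<le> k \<and> is_saw T v i ws}"
proof (rule finite_subset)
  show "{ws. \<exists>i. 1 \<le> i \<and> i \<le> k \<and> is_saw T v i ws} \<subseteq> {ws. set ws \<subseteq> verts T \<and> length ws \<le> k + 1}"
    using set_saw_subset_verts by (auto simp: is_saw_def)
  show "finite {ws. set ws \<subseteq> verts T \<and> length ws \<le> k + 1}"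
    by (rule finite_lists_length_le[OF finite_verts])
qed

lemma card_descendants_le_N_le:
  "card (descendants T k) \<le> N_le k T []"
  unfolding N_le_def
proof (rule card_inj_on_le)
  show "inj_on root_path (descendants T k)"
    using inj_root_path by (rule inj_on_subset) simp
  show "root_path ` descendants T k \<subseteq> {ws. \<exists>i. 1 \<le> i \<and> i \<le> k \<and> is_saw T [] i ws}"
    using is_saw_root_path by (force simp: descendants_def)
qed (rule finite_saws)

lemma N_le_root_le_power:
  assumes "k \<ge> 1" "d > 0" "mu k T \<le> d"
  shows "real (N_le k T []) \<le> d ^ k"
proof -
  have "real (N_le k T []) powr (1 / real k) \<le> mu k T"
    unfolding mu_def by (rule cSUP_upper) (auto intro!: bdd_above_finite finite_verts)
  then have root: "real (N_le k T []) powr (1 / real k) \<le> d"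
    using assms by linarith
  have "real (N_le k T []) = (real (N_le k T []) powr (1 / real k)) powr real k"
    using assms(1) by (simp add: powr_powr)
  also have "\<dots> \<le> d powr real k"
    using root by (intro powr_mono2) auto
  also have "\<dots> = d ^ k"
    using assms by (simp add: powr_realpow)
  finally show ?thesis .
qed

lemma card_descendants_le:
  assumes "k \<ge> 1" "d > 0" "T \<in> tree_class k d"
  shows "real (card (descendants T k)) \<le> d ^ k"
  using card_descendants_le_N_le[of T k] N_le_root_le_power[of k d T] assms
  by (simp add: tree_class_def)

lemma tree_class_branching_le:
  assumes "k \<ge> 1" "d > 0" "T \<in> tree_class k d"
  shows "branching_le (nat \<lfloor>d ^ k\<rfloor>) k T"
proof (rule branching_leI)
  fix p ts assume p: "subtree T p = Some (Node ts)" "length p < k"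
  let ?children = "(\<lambda>i. p @ [i]) ` {..<length ts}"
  have "?children \<subseteq> descendants T k"
    using p by (auto simp: descendants_def verts_def subtree_append)
  then have "card ?children \<le> card (descendants T k)"
    by (rule card_mono[OF finite_descendants])
  moreover have "card ?children = length ts"
    by (simp add: card_image inj_on_def)
  ultimately have "real (length ts) \<le> d ^ k"
    using card_descendants_le[OF assms] by linarith
  then show "length ts \<le> nat \<lfloor>d ^ k\<rfloor>"
    by (simp add: le_nat_floor)
qed

lemma tree_class_card_level_le:
  assumes "k \<ge> 1" "d > 0" "T \<in> tree_class k d"
  shows "real (card (level T k)) \<le> d ^ k"
proof -
  have "level T k \<subseteq> descendants T k"
    using assms(1) by (auto simp: descendants_def level_def)
  then have "card (level T k) \<le> card (descendants T k)"
    by (rule card_mono[OF finite_descendants])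
  then show ?thesis
    using card_descendants_le[OF assms] by linarith
qed

section \<open>The block operator\<close>

lemma prod_inverse_one_plus_bounds:
  fixes b :: "nat \<Rightarrow> real"
  assumes lam: "0 \<le> lam" and b: "\<And>i. i < n \<Longrightarrow> 0 \<le> b i \<and> b i \<le> lam" and n: "n \<le> M"
  shows "inverse (1 + lam) ^ M \<le> (\<Prod>i<n. inverse (1 + b i))" "(\<Prod>i<n. inverse (1 + b i)) \<le> 1"
proof -
  have "inverse (1 + lam) ^ M \<le> inverse (1 + lam) ^ n"
    using lam n by (intro power_decreasing) (auto simp: inverse_le_1_iff)
  also have "\<dots> = (\<Prod>i<n. inverse (1 + lam))"
    by simp
  also have "\<dots> \<le> (\<Prod>i<n. inverse (1 + b i))"
    using b lam by (intro prod_mono) (force intro!: le_imp_inverse_le)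
  finally show "inverse (1 + lam) ^ M \<le> (\<Prod>i<n. inverse (1 + b i))" .
  show "(\<Prod>i<n. inverse (1 + b i)) \<le> 1"
    using b by (intro prod_le_1) (auto simp: inverse_le_1_iff)
qed

lemma blk_maps_interval:
  assumes lam: "0 \<le> lam"
  shows "branching_le M j t \<Longrightarrow> (\<forall>u\<in>level t j. R u \<in> {lam / (1 + lam) ^ M..lam}) \<Longrightarrow>
    blk_defined lam j R t \<and> blk lam j R t \<in> {lam / (1 + lam) ^ M..lam}"
proof (induction j arbitrary: t R)
  case 0
  then show ?case by (simp add: level_0)
next
  case (Suc j)
  obtain ts where t: "t = Node ts" by (cases t)
  let ?lo = "lam / (1 + lam) ^ M"
  have lo: "0 \<le> ?lo" "?lo \<le> lam"
    using lam by (auto simp: divide_le_eq one_le_power mult_le_cancel_left1)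
  let ?b = "\<lambda>i. blk lam j (\<lambda>p. R (i # p)) (ts ! i)"
  have child: "blk_defined lam j (\<lambda>p. R (i # p)) (ts ! i) \<and> ?b i \<in> {?lo..lam}"
    if "i < length ts" for i
    using Suc.prems that by (intro Suc.IH) (auto simp: t level_Suc_Node)
  then have "blk_defined lam (Suc j) R t"
    using lo by (fastforce simp: t)
  moreover have "blk lam (Suc j) R t \<in> {?lo..lam}"
  proof (cases "ts = []")
    case False
    have bounds: "inverse (1 + lam) ^ M \<le> (\<Prod>i<length ts. inverse (1 + ?b i))"
        "(\<Prod>i<length ts. inverse (1 + ?b i)) \<le> 1"
      using child lo Suc.prems(1)
      by (intro prod_inverse_one_plus_bounds[OF lam]; force simp: t)+
    have "?lo = lam * inverse (1 + lam) ^ M"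
      by (simp add: field_simps power_inverse)
    with bounds lam False show ?thesis
      by (auto simp: t intro: mult_left_mono mult_left_le)
  qed (use lo in \<open>simp add: t\<close>)
  ultimately show ?case ..
qed

lemma blk_zero_Suc: "blk 0 (Suc j) R t = 0"
  by (cases t) simp

text \<open>Chain rule along the path from the root to \<open>u\<close>, using \<open>\<partial>F / \<partial>F\<^sub>i = - F / (1 + F\<^sub>i)\<close> for the
  value \<open>F\<^sub>i\<close> at the \<open>i\<close>-th child. Only meaningful for \<open>u \<in> level t j\<close>.\<close>

fun blk_partial :: "real \<Rightarrow> nat \<Rightarrow> (nat list \<Rightarrow> real) \<Rightarrow> rtree \<Rightarrow> nat list \<Rightarrow> real" where
  "blk_partial lam 0 R t u = 1"
| "blk_partial lam (Suc j) R (Node ts) (i # p) = - blk lam (Suc j) R (Node ts)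
     * inverse (1 + blk lam j (\<lambda>q. R (i # q)) (ts ! i)) * blk_partial lam j (\<lambda>q. R (i # q)) (ts ! i) p"
| "blk_partial lam (Suc j) R (Node ts) [] = 0"

lemma blk_Suc_Node_fun_upd:
  assumes i: "i < length ts"
  shows "blk lam (Suc j) (R(i # p := s)) (Node ts)
    = lam * inverse (1 + blk lam j ((\<lambda>q. R (i # q))(p := s)) (ts ! i))
      * (\<Prod>l\<in>{..<length ts} - {i}. inverse (1 + blk lam j (\<lambda>q. R (l # q)) (ts ! l)))"
proof -
  have "(\<lambda>q. (R(i # p := s)) (l # q)) = (\<lambda>q. R (l # q))" if "l \<noteq> i" for l
    using that by auto
  moreover have "(\<lambda>q. (R(i # p := s)) (i # q)) = (\<lambda>q. R (i # q))(p := s)"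
    by auto
  ultimately show ?thesis
    using i by (auto simp: prod.remove[of _ i] intro!: prod.cong)
qed

lemma blk_has_partial_derivative:
  "u \<in> level t j \<Longrightarrow> blk_defined lam j R t \<Longrightarrow>
   ((\<lambda>s. blk lam j (R(u := s)) t) has_real_derivative blk_partial lam j R t u) (at (R u))"
proof (induction j arbitrary: t R u)
  case 0
  then show ?case by (simp add: level_0)
next
  case (Suc j)
  obtain ts where t: "t = Node ts" by (cases t)
  from Suc.prems(1) obtain i p where u: "u = i # p" and i: "i < length ts" and p: "p \<in> level (ts ! i) j"
    by (auto simp: t level_Suc_Node)
  define Ri where "Ri = (\<lambda>q. R (i # q))"
  define f where "f = (\<lambda>s. blk lam j (Ri(p := s)) (ts ! i))"
  define C where "C = (\<Prod>l\<in>{..<length ts} - {i}. inverse (1 + blk lam j (\<lambda>q. R (l # q)) (ts ! l)))"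
  have Ri: "blk_defined lam j Ri (ts ! i)" "1 + blk lam j Ri (ts ! i) \<noteq> 0" "Ri p = R u"
    using Suc.prems(2) i by (simp_all add: t u Ri_def)
  have f0: "f (R u) = blk lam j Ri (ts ! i)"
    unfolding f_def Ri(3)[symmetric] by simp
  have f': "(f has_real_derivative blk_partial lam j Ri (ts ! i) p) (at (R u))"
    using Suc.IH[OF p Ri(1)] unfolding f_def Ri(3) .
  have blk_eq: "blk lam (Suc j) (R(u := s)) t = lam * inverse (1 + f s) * C" for s
    unfolding t u f_def Ri_def C_def by (rule blk_Suc_Node_fun_upd[OF i])
  have "blk_partial lam (Suc j) R t u
      = - (lam * inverse (1 + f (R u)) * C) * inverse (1 + f (R u)) * blk_partial lam j Ri (ts ! i) p"
    using blk_eq[of "R u"] f0 by (simp add: t u Ri_def)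
  then have "((\<lambda>s. lam * inverse (1 + f s) * C) has_real_derivative blk_partial lam (Suc j) R t u) (at (R u))"
    using Ri(2) f0 by (auto intro!: derivative_eq_intros f' simp: field_simps power2_eq_square)
  then show ?case
    unfolding blk_eq .
qed

section \<open>A potential for the partial derivatives\<close>

definition ln_weight :: "real \<Rightarrow> real \<Rightarrow> real" where
  "ln_weight a y = (1 + y) powr a * ln (1 + y)"

definition potential :: "real \<Rightarrow> real \<Rightarrow> nat \<Rightarrow> (nat list \<Rightarrow> real) \<Rightarrow> rtree \<Rightarrow> real" where
  "potential lam a j R t = (\<Sum>u\<in>level t j. \<bar>blk_partial lam j R t u\<bar> powr a * ln_weight a (R u))"

lemma ln_weight_nonneg: "0 \<le> y \<Longrightarrow> 0 \<le> ln_weight a y"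
  by (simp add: ln_weight_def)

lemma potential_Suc_Node:
  "potential lam a (Suc j) R (Node ts) = (\<Sum>i<length ts.
     \<bar>blk lam (Suc j) R (Node ts) / (1 + blk lam j (\<lambda>q. R (i # q)) (ts ! i))\<bar> powr a
       * potential lam a j (\<lambda>q. R (i # q)) (ts ! i))"
  unfolding potential_def sum_level_Suc_Node sum_distrib_left
  by (intro sum.cong refl) (simp add: abs_mult powr_mult divide_inverse mult.assoc)

lemma sum_ln_one_plus_children:
  assumes "ts \<noteq> []" "0 < lam"
    and children: "\<And>i. i < length ts \<Longrightarrow> 0 \<le> blk lam j (\<lambda>q. R (i # q)) (ts ! i)"
  shows "(\<Sum>i<length ts. ln (1 + blk lam j (\<lambda>q. R (i # q)) (ts ! i)))
    = ln (lam / blk lam (Suc j) R (Node ts))"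
proof -
  let ?P = "\<Prod>i<length ts. (1 + blk lam j (\<lambda>q. R (i # q)) (ts ! i))"
  have "0 < ?P"
    using children by (intro prod_pos) (simp add: add_pos_nonneg)
  moreover have "blk lam (Suc j) R (Node ts) = lam / ?P"
    using assms(1) by (simp add: prod_inversef[symmetric] divide_inverse)
  ultimately have "lam / blk lam (Suc j) R (Node ts) = ?P"
    using assms(2) by simp
  moreover have "ln ?P = (\<Sum>i<length ts. ln (1 + blk lam j (\<lambda>q. R (i # q)) (ts ! i)))"
    by (rule ln_prod) (auto dest: children)
  ultimately show ?thesis
    by simp
qed

text \<open>One level down, the partial derivatives pick up the factors \<open>F / (1 + F\<^sub>i)\<close>, where
  \<open>F\<^sub>i\<close> are the values at the children; as \<open>\<Prod>(1 + F\<^sub>i) = \<lambda> / F\<close>, the children's weights add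
  up to \<open>F\<^sup>a ln (\<lambda> / F)\<close>.\<close>

lemma potential_Suc_Node_le:
  assumes ts: "ts \<noteq> []" and lam: "0 < lam" and F: "0 < blk lam (Suc j) R (Node ts)"
    and children: "\<And>i. i < length ts \<Longrightarrow> 0 \<le> blk lam j (\<lambda>q. R (i # q)) (ts ! i)"
    and IH: "\<And>i. i < length ts \<Longrightarrow>
      potential lam a j (\<lambda>q. R (i # q)) (ts ! i) \<le> B * ln_weight a (blk lam j (\<lambda>q. R (i # q)) (ts ! i))"
  shows "potential lam a (Suc j) R (Node ts)
    \<le> B * (blk lam (Suc j) R (Node ts) powr a * ln (lam / blk lam (Suc j) R (Node ts)))"
proof -
  let ?F = "blk lam (Suc j) R (Node ts)"
  let ?b = "\<lambda>i. blk lam j (\<lambda>q. R (i # q)) (ts ! i)"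
  have "potential lam a (Suc j) R (Node ts) \<le> (\<Sum>i<length ts. (?F / (1 + ?b i)) powr a * (B * ln_weight a (?b i)))"
    unfolding potential_Suc_Node
  proof (rule sum_mono)
    fix i assume "i \<in> {..<length ts}"
    then have "\<bar>?F / (1 + ?b i)\<bar> = ?F / (1 + ?b i)"
      using F children by simp
    with IH \<open>i \<in> {..<length ts}\<close>
    show "\<bar>?F / (1 + ?b i)\<bar> powr a * potential lam a j (\<lambda>q. R (i # q)) (ts ! i)
        \<le> (?F / (1 + ?b i)) powr a * (B * ln_weight a (?b i))"
      by (simp add: mult_left_mono)
  qed
  also have "\<dots> = B * (?F powr a * (\<Sum>i<length ts. ln (1 + ?b i)))"
    unfolding sum_distrib_left
    using F children by (intro sum.cong refl) (auto simp: ln_weight_def powr_divide add_pos_nonneg)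
  also have "(\<Sum>i<length ts. ln (1 + ?b i)) = ln (lam / ?F)"
    using children by (rule sum_ln_one_plus_children[OF ts lam])
  finally show ?thesis .
qed

lemma potential_le:
  assumes lam: "0 < lam" and K: "0 \<le> K"
    and vertex: "\<And>b. b \<in> {lam / (1 + lam) ^ M..lam} \<Longrightarrow> b powr a * ln (lam / b) \<le> K * ln_weight a b"
  shows "branching_le M j t \<Longrightarrow> (\<forall>u\<in>level t j. R u \<in> {lam / (1 + lam) ^ M..lam}) \<Longrightarrow>
    potential lam a j R t \<le> K ^ j * ln_weight a (blk lam j R t)"
proof (induction j arbitrary: t R)
  case 0
  then show ?case by (simp add: potential_def level_0)
next
  case (Suc j)
  obtain ts where t: "t = Node ts" by (cases t)
  let ?lo = "lam / (1 + lam) ^ M"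
  let ?F = "blk lam (Suc j) R t"
  have lo: "0 < ?lo"
    using lam by simp
  have F: "?F \<in> {?lo..lam}"
    using blk_maps_interval[OF less_imp_le[OF lam] Suc.prems] by simp
  have child: "branching_le M j (ts ! i) \<and> (\<forall>u\<in>level (ts ! i) j. R (i # u) \<in> {?lo..lam})"
    if "i < length ts" for i
    using Suc.prems that by (auto simp: t level_Suc_Node)
  show ?case
  proof (cases "ts = []")
    case True
    then show ?thesis
      using F lo K by (simp add: t potential_def level_Suc_Node ln_weight_nonneg)
  next
    case False
    have "potential lam a (Suc j) R t \<le> K ^ j * (?F powr a * ln (lam / ?F))"
      unfolding t
    proof (rule potential_Suc_Node_le[OF False lam])
      fix i assume "i < length ts"
      with child[of i] show "0 \<le> blk lam j (\<lambda>q. R (i # q)) (ts ! i)"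
        "potential lam a j (\<lambda>q. R (i # q)) (ts ! i) \<le> K ^ j * ln_weight a (blk lam j (\<lambda>q. R (i # q)) (ts ! i))"
        using blk_maps_interval[OF less_imp_le[OF lam], of M j "ts ! i" "\<lambda>q. R (i # q)"] lo Suc.IH by auto
    qed (use F lo t in auto)
    also have "\<dots> \<le> K ^ j * (K * ln_weight a ?F)"
      using vertex[OF F] K by (intro mult_left_mono) auto
    finally show ?thesis
      by (simp add: mult_ac)
  qed
qed

section \<open>The one-variable inequality behind \<open>\<lambda>\<^sub>c\<close>\<close>

lemma div_one_plus_le_ln_one_plus: "0 < (t::real) \<Longrightarrow> t / (1 + t) \<le> ln (1 + t)"
  using ln_le_minus_one[of "inverse (1 + t)"] by (simp add: ln_div divide_simps)

lemma ln_one_plus_div_antimono: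
  fixes s t :: real
  assumes "0 < s" "s \<le> t"
  shows "ln (1 + t) / t \<le> ln (1 + s) / s"
proof (rule deriv_nonpos_imp_antimono[of s t "\<lambda>x. ln (1 + x) / x" "\<lambda>x. (x / (1 + x) - ln (1 + x)) / x\<^sup>2"])
  fix x assume "x \<in> {s..t}"
  then have x: "0 < x"
    using assms by auto
  then show "((\<lambda>x. ln (1 + x) / x) has_real_derivative (x / (1 + x) - ln (1 + x)) / x\<^sup>2) (at x)"
    by (auto intro!: derivative_eq_intros simp: field_simps power2_eq_square)
  show "(x / (1 + x) - ln (1 + x)) / x\<^sup>2 \<le> 0"
    using div_one_plus_le_ln_one_plus[OF x] x by (intro divide_nonpos_pos) auto
qed (use assms in auto)

definition contraction_exponent :: "real \<Rightarrow> real" where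
  "contraction_exponent d = 2 / ((d - 1) * ln (d / (d - 1)))"

text \<open>Divided by \<open>b ^ a\<close>, \<open>lambda_c_inequality\<close> below says \<open>omega d a b \<ge> omega d a (1 / (d - 1))\<close>.\<close>

definition omega :: "real \<Rightarrow> real \<Rightarrow> real \<Rightarrow> real" where
  "omega d a t = ((1 + t) / t) powr a * ln (1 + t) + d powr (a - 1) * ln t"

definition omega_slope :: "real \<Rightarrow> real \<Rightarrow> real \<Rightarrow> real" where
  "omega_slope d a x = 1 - a * (ln (1 + x) / x) + (d * x / (1 + x)) powr (a - 1)"

lemma one_plus_inverse_pred: "d > (1::real) \<Longrightarrow> 1 + 1 / (d - 1) = d / (d - 1)"
  by (simp add: field_simps)

lemma contraction_exponent_gt_2:
  assumes d: "d > 1"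
  shows "contraction_exponent d > 2"
proof -
  have "ln (d / (d - 1)) < 1 / (d - 1)"
    using ln_add_one_self_less_self[of "1 / (d - 1)"] d by (simp add: one_plus_inverse_pred)
  moreover have "0 < ln (d / (d - 1))"
    using d by simp
  ultimately show ?thesis
    using d by (simp add: contraction_exponent_def field_simps)
qed

text \<open>The exponent is chosen such that \<open>omega_slope\<close> vanishes at \<open>1 / (d - 1)\<close>, the minimum of \<open>omega\<close>.\<close>

lemma contraction_exponent_balance:
  assumes d: "d > 1"
  shows "contraction_exponent d * (ln (1 + 1 / (d - 1)) / (1 / (d - 1))) = 2"
proof -
  have "0 < ln (d / (d - 1))"
    using d by simp
  then show ?thesis
    using d by (simp add: one_plus_inverse_pred contraction_exponent_def field_simps)
qed

lemma omega_has_derivative: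
  assumes x: "0 < x"
  shows "(omega d a has_real_derivative ((1 + x) / x) powr (a - 1) * omega_slope d a x / x) (at x)"
proof -
  let ?P = "((1 + x) / x) powr (a - 1)" and ?Q = "(d * x / (1 + x)) powr (a - 1)"
  have D: "(omega d a has_real_derivative
      a * ?P * (- 1 / x\<^sup>2) * ln (1 + x) + ((1 + x) / x) powr a * (1 / (1 + x)) + d powr (a - 1) * (1 / x)) (at x)"
    unfolding omega_def[abs_def] using x
    by (auto intro!: derivative_eq_intros DERIV_fun_powr[where m = a] simp: field_simps power2_eq_square)
  have P: "((1 + x) / x) powr a = ?P * ((1 + x) / x)"
    using x by (simp add: powr_diff)
  have Q: "d powr (a - 1) = ?P * ?Q"
    using x by (simp add: powr_mult[symmetric])
  have "a * ?P * (- 1 / x\<^sup>2) * ln (1 + x) + ?P * ((1 + x) / x) * (1 / (1 + x)) + ?P * ?Q * (1 / x)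
      = ?P * omega_slope d a x / x"
    unfolding omega_slope_def using x
    by (simp add: divide_simps power2_eq_square) (simp add: algebra_simps)
  then show ?thesis
    using D unfolding P Q by simp
qed

lemma omega_slope_nonpos:
  assumes d: "d > 1" and x: "0 < x" "x \<le> 1 / (d - 1)"
  shows "omega_slope d (contraction_exponent d) x \<le> 0"
proof -
  let ?a = "contraction_exponent d"
  have "2 \<le> ?a * (ln (1 + x) / x)"
    using contraction_exponent_balance[OF d] contraction_exponent_gt_2[OF d] ln_one_plus_div_antimono[OF x]
    by (metis less_le mult_left_mono order_less_trans zero_less_numeral)
  moreover have "(d * x / (1 + x)) powr (?a - 1) \<le> 1"
    using x d contraction_exponent_gt_2[OF d] by (intro powr_le1) (auto simp: field_simps)
  ultimately show ?thesis
    by (simp add: omega_slope_def)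
qed

lemma omega_slope_nonneg:
  assumes d: "d > 1" and x: "1 / (d - 1) \<le> x"
  shows "0 \<le> omega_slope d (contraction_exponent d) x"
proof -
  let ?a = "contraction_exponent d"
  have s: "0 < 1 / (d - 1)"
    using d by simp
  then have x0: "0 < x"
    using x by linarith
  have "?a * (ln (1 + x) / x) \<le> 2"
    using contraction_exponent_balance[OF d] contraction_exponent_gt_2[OF d] ln_one_plus_div_antimono[OF s x]
    by (metis less_le mult_left_mono order_less_trans zero_less_numeral)
  moreover have "1 \<le> (d * x / (1 + x)) powr (?a - 1)"
    using x x0 d contraction_exponent_gt_2[OF d]
    by (intro ge_one_powr_ge_zero) (auto simp: le_divide_eq field_simps)
  ultimately show ?thesis
    by (simp add: omega_slope_def)
qed

lemma omega_min:
  assumes d: "d > 1" and t: "0 < t"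
  shows "omega d (contraction_exponent d) (1 / (d - 1)) \<le> omega d (contraction_exponent d) t"
proof -
  let ?a = "contraction_exponent d" and ?s = "1 / (d - 1)"
  let ?D = "\<lambda>x. ((1 + x) / x) powr (?a - 1) * omega_slope d ?a x / x"
  have s: "0 < ?s"
    using d by simp
  show ?thesis
  proof (cases "t \<le> ?s")
    case True
    show ?thesis
    proof (rule deriv_nonpos_imp_antimono[of t ?s _ ?D])
      fix x assume "x \<in> {t..?s}"
      then show "(omega d ?a has_real_derivative ?D x) (at x)" "?D x \<le> 0"
        using t omega_has_derivative[of x] omega_slope_nonpos[OF d, of x]
        by (auto simp: mult_nonneg_nonpos divide_nonpos_pos)
    qed (use True in auto)
  next
    case False
    show ?thesis
    proof (rule deriv_nonneg_imp_mono[of ?s t _ ?D])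
      fix x assume x: "x \<in> {?s..t}"
      then have "0 < x"
        using s by (meson atLeastAtMost_iff order_less_le_trans)
      then show "(omega d ?a has_real_derivative ?D x) (at x)" "0 \<le> ?D x"
        using x omega_has_derivative[of x] omega_slope_nonneg[OF d, of x] by auto
    qed (use False in auto)
  qed
qed

lemma omega_at_min:
  assumes d: "d > 1"
  shows "omega d a (1 / (d - 1)) = d powr (a - 1) * ln (lambda_c d)"
proof -
  have lc: "ln (lambda_c d) = d * ln d - (d + 1) * ln (d - 1)"
    using d by (simp add: lambda_c_def ln_div)
  have pw: "d powr a = d powr (a - 1) * d"
    using d by (simp add: powr_diff)
  have quot: "(1 + 1 / (d - 1)) / (1 / (d - 1)) = d"
    using d by (simp add: field_simps)
  show ?thesis
    unfolding omega_def quot lc pw using d by (simp add: one_plus_inverse_pred ln_div algebra_simps)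
qed

lemma lambda_c_inequality:
  assumes d: "d > 1" and b: "0 < b"
  defines "a \<equiv> contraction_exponent d"
  shows "d powr (a - 1) * b powr a * (ln (lambda_c d) - ln b) \<le> ln_weight a b"
proof -
  have "d powr (a - 1) * (ln (lambda_c d) - ln b) \<le> ((1 + b) / b) powr a * ln (1 + b)"
    using omega_min[OF d b] omega_at_min[OF d, of a] by (simp add: a_def omega_def algebra_simps)
  then have "b powr a * (d powr (a - 1) * (ln (lambda_c d) - ln b)) \<le> b powr a * (((1 + b) / b) powr a * ln (1 + b))"
    by (rule mult_left_mono) simp
  also have "\<dots> = ln_weight a b"
    using b by (simp add: ln_weight_def powr_divide)
  finally show ?thesis
    by (simp add: algebra_simps)
qed

text \<open>On \<open>[lo, \<lambda>]\<close> with \<open>\<lambda> < \<lambda>\<^sub>c\<close>, the slack \<open>ln (\<lambda>\<^sub>c / \<lambda>) > 0\<close> in \<open>lambda_c_inequality\<close> is a fixed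
  fraction of the weight, which yields a factor \<open>c < 1\<close>.\<close>

lemma vertex_inequality:
  assumes d: "d > 1" and lam: "0 < lam" "lam < lambda_c d" and lo: "0 < lo" "lo \<le> lam"
  defines "a \<equiv> contraction_exponent d"
  obtains c where "0 < c" "c < 1"
    "\<And>b. b \<in> {lo..lam} \<Longrightarrow> b powr a * ln (lam / b) \<le> c * d powr (1 - a) * ln_weight a b"
proof
  define \<delta> where "\<delta> = ln (lambda_c d) - ln lam"
  define X where "X = d powr (a - 1) * lo powr a * \<delta> / ln_weight a lam"
  have a: "a > 2"
    using contraction_exponent_gt_2[OF d] by (simp add: a_def)
  have "0 < \<delta>"
    using lam by (simp add: \<delta>_def)
  moreover have w: "0 < ln_weight a lam"
    using lam by (simp add: ln_weight_def)
  ultimately have X: "0 < X"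
    using lo d by (simp add: X_def)
  show "0 < 1 - min (1 / 2) X" "1 - min (1 / 2) X < 1"
    using X by auto
  fix b assume b: "b \<in> {lo..lam}"
  then have b0: "0 < b"
    using lo by simp
  have "d powr (a - 1) * b powr a * (ln (lam / b) + \<delta>) \<le> ln_weight a b"
    using lambda_c_inequality[OF d b0] b0 lam by (simp add: a_def \<delta>_def ln_div)
  moreover have "min (1 / 2) X * ln_weight a b \<le> X * ln_weight a lam"
    using b0 b X a by (intro mult_mono) (auto simp: ln_weight_def intro!: mult_mono powr_mono2)
  moreover have "X * ln_weight a lam \<le> d powr (a - 1) * b powr a * \<delta>"
    using w b lo \<open>0 < \<delta>\<close> a by (simp add: X_def) (intro mult_right_mono mult_left_mono powr_mono2; simp)
  ultimately have "d powr (a - 1) * (b powr a * ln (lam / b)) \<le> (1 - min (1 / 2) X) * ln_weight a b"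
    by (simp add: algebra_simps)
  then have "d powr (1 - a) * (d powr (a - 1) * (b powr a * ln (lam / b)))
      \<le> d powr (1 - a) * ((1 - min (1 / 2) X) * ln_weight a b)"
    by (rule mult_left_mono) simp
  moreover have "d powr (1 - a) * d powr (a - 1) = 1"
    using d by (simp add: powr_add[symmetric])
  ultimately show "b powr a * ln (lam / b) \<le> (1 - min (1 / 2) X) * d powr (1 - a) * ln_weight a b"
    by (simp add: mult_ac)
qed

section \<open>The coordinate change\<close>

lemma real_analytic_on_holomorphic:
  fixes f :: "real \<Rightarrow> real" and F :: "complex \<Rightarrow> complex"
  assumes hol: "F holomorphic_on A" and A: "open A" "complex_of_real ` S \<subseteq> A"
    and F: "\<And>y. complex_of_real y \<in> A \<Longrightarrow> F (of_real y) = of_real (f y)"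
  shows "real_analytic_on f S"
  unfolding real_analytic_on_def
proof
  fix x assume "x \<in> S"
  then obtain r where r: "0 < r" "ball (of_real x) r \<subseteq> A"
    using A by (force simp: open_contains_ball)
  define c where "c n = Re ((deriv ^^ n) F (of_real x) / fact n)" for n
  have "(\<lambda>n. c n * (y - x) ^ n) sums f y" if y: "\<bar>y - x\<bar> < r" for y
  proof -
    have yb: "complex_of_real y \<in> ball (of_real x) r"
      using y by (simp add: dist_norm abs_minus_commute flip: of_real_diff)
    have "(\<lambda>n. (deriv ^^ n) F (of_real x) / fact n * (of_real y - of_real x) ^ n) sums F (of_real y)"
      by (rule holomorphic_power_series[OF holomorphic_on_subset[OF hol r(2)] yb])
    from sums_Re[OF this]
    have "(\<lambda>n. Re ((deriv ^^ n) F (of_real x) / fact n * (of_real y - of_real x) ^ n)) sums Re (F (of_real y))" .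
    moreover have "Re ((deriv ^^ n) F (of_real x) / fact n * (of_real y - of_real x) ^ n) = c n * (y - x) ^ n" for n
    proof -
      have "(complex_of_real y - complex_of_real x) ^ n = of_real ((y - x) ^ n)"
        by simp
      then show ?thesis
        unfolding c_def by (simp only: times_complex.sel Im_complex_of_real Re_complex_of_real)
    qed
    ultimately have "(\<lambda>n. c n * (y - x) ^ n) sums Re (F (of_real y))"
      by simp
    moreover have "F (of_real y) = of_real (f y)"
      using F r(2) yb by blast
    ultimately show ?thesis
      by simp
  qed
  with r show "\<exists>r>0. \<exists>c. \<forall>y. \<bar>y - x\<bar> < r \<longrightarrow> (\<lambda>n. c n * (y - x) ^ n) sums f y"
    by blast
qed

lemma real_analytic_on_id: "real_analytic_on id S"
  by (rule real_analytic_on_holomorphic[of id UNIV]) auto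

definition phi :: "real \<Rightarrow> real \<Rightarrow> real" where
  "phi be x = ln (1 + x) powr be"

definition phinv :: "real \<Rightarrow> real \<Rightarrow> real" where
  "phinv be y = exp (y powr (1 / be)) - 1"

definition dphi :: "real \<Rightarrow> real \<Rightarrow> real" where
  "dphi be y = be * ln (1 + y) powr (be - 1) / (1 + y)"

lemma real_analytic_on_phi:
  assumes "S \<subseteq> {0<..}"
  shows "real_analytic_on (phi be) S"
proof (rule real_analytic_on_holomorphic[of "\<lambda>z. exp (of_real be * Ln (Ln (1 + z)))" "{z. 0 < Re z}"])
  have "1 + z \<notin> \<real>\<^sub>\<le>\<^sub>0 \<and> Ln (1 + z) \<notin> \<real>\<^sub>\<le>\<^sub>0" if "0 < Re z" for z
  proof -
    have "1 < Re (1 + z)"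
      using that by simp
    also have "\<dots> \<le> cmod (1 + z)"
      by (rule complex_Re_le_cmod)
    finally have "0 < Re (Ln (1 + z))"
      by (subst Re_Ln) (auto intro: ln_gt_zero)
    then show ?thesis
      using that by (simp add: complex_nonpos_Reals_iff)
  qed
  then show "(\<lambda>z. exp (of_real be * Ln (Ln (1 + z)))) holomorphic_on {z. 0 < Re z}"
    by (intro holomorphic_intros) auto
  show "open {z. 0 < Re z}"
    by (rule open_halfspace_Re_gt)
  show "complex_of_real ` S \<subseteq> {z. 0 < Re z}"
    using assms by auto
  fix y assume "complex_of_real y \<in> {z. 0 < Re z}"
  then have "0 < y"
    by simp
  then have "Ln (1 + of_real y) = of_real (ln (1 + y))"
    using Ln_of_real[of "1 + y"] by simp
  then have "Ln (Ln (1 + of_real y)) = of_real (ln (ln (1 + y)))"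
    using Ln_of_real[of "ln (1 + y)"] \<open>0 < y\<close> by simp
  then show "exp (of_real be * Ln (Ln (1 + of_real y))) = of_real (phi be y)"
    using \<open>0 < y\<close> by (simp add: phi_def powr_def of_real_exp)
qed

lemma phi_pos: "0 < x \<Longrightarrow> 0 < phi be x"
  by (simp add: phi_def)

lemma inj_on_phi:
  assumes "0 < be" "S \<subseteq> {0<..}"
  shows "inj_on (phi be) S"
proof (rule strict_mono_on_imp_inj_on, rule strict_mono_onI)
  fix x y assume "x \<in> S" "y \<in> S" "x < y"
  then show "phi be x < phi be y"
    using assms unfolding phi_def by (intro powr_less_mono2) auto
qed

lemma phi_has_derivative: "0 < x \<Longrightarrow> (phi be has_real_derivative dphi be x) (at x)"
  unfolding phi_def[abs_def] dphi_def
  by (auto intro!: derivative_eq_intros DERIV_fun_powr[where m = be] simp: field_simps)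

lemma dphi_pos: "0 < be \<Longrightarrow> 0 < x \<Longrightarrow> 0 < dphi be x"
  by (simp add: dphi_def)

lemma deriv_phi_nonzero: "0 < be \<Longrightarrow> 0 < x \<Longrightarrow> deriv (phi be) x \<noteq> 0"
  using DERIV_imp_deriv[OF phi_has_derivative] dphi_pos by (metis less_irrefl)

lemma phinv_phi: "0 < be \<Longrightarrow> 0 < x \<Longrightarrow> phinv be (phi be x) = x"
  by (simp add: phinv_def phi_def powr_powr)

lemma phinv_has_derivative:
  assumes be: "0 < be" and r: "0 < r"
  shows "(phinv be has_real_derivative 1 / dphi be r) (at (phi be r))"
proof -
  have "(phinv be has_real_derivative exp (phi be r powr (1 / be)) * (1 / be * phi be r powr (1 / be - 1)))
      (at (phi be r))"
    unfolding phinv_def[abs_def]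
    using phi_pos[OF r] by (auto intro!: derivative_eq_intros DERIV_fun_powr[where m = "1 / be"])
  moreover have "phi be r powr (1 / be) = ln (1 + r)"
    using be r by (simp add: phi_def powr_powr)
  moreover have "phi be r powr (1 / be - 1) = ln (1 + r) powr (be * (1 / be - 1))"
    using r by (simp add: phi_def powr_powr)
  moreover have "be * (1 / be - 1) = 1 - be"
    using be by (simp add: field_simps)
  ultimately show ?thesis
    using be r by (simp add: dphi_def powr_diff mult.commute)
qed

text \<open>With \<open>\<beta> = 1 - 1 / a\<close>, \<open>dphi \<beta> y ^ a\<close> is inversely proportional to \<open>ln_weight a y\<close>; hence the
  \<open>a\<close>-th powers of the gradient entries in \<open>\<phi>\<close>-coordinates sum to the potential divided by the
  weight of the value at the root.\<close>

lemma dphi_ratio_powr: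
  assumes a: "1 < a" and be: "be = 1 - 1 / a" and r: "0 < r" and s: "0 < s"
  shows "(dphi be s / dphi be r) powr a = ln_weight a r / ln_weight a s"
proof -
  have "dphi be y = be / ((1 + y) * ln (1 + y) powr (1 / a))" if "0 < y" for y
    using that by (simp add: dphi_def be powr_minus divide_simps)
  moreover have "((1 + y) * ln (1 + y) powr (1 / a)) powr a = ln_weight a y" if "0 < y" for y
    using that a by (simp add: ln_weight_def powr_mult powr_powr)
  moreover have "1 / a < 1"
    using a by simp
  then have "0 < be"
    using be by simp
  ultimately show ?thesis
    using r s by (simp add: powr_divide)
qed

section \<open>Contraction in \<open>\<phi>\<close>-coordinates\<close>

lemma power_mean_pos:
  fixes g :: "'a \<Rightarrow> real"
  assumes S: "finite S" "S \<noteq> {}" and g: "\<And>u. u \<in> S \<Longrightarrow> 0 < g u" and a: "1 \<le> a"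
  shows "(\<Sum>u\<in>S. g u) powr a \<le> real (card S) powr (a - 1) * (\<Sum>u\<in>S. g u powr a)"
proof -
  define N where "N = real (card S)"
  have N: "0 < N"
    using S by (simp add: N_def card_gt_0_iff)
  have "(\<Sum>u\<in>S. (1 / N) *\<^sub>R g u) powr a \<le> (\<Sum>u\<in>S. 1 / N * g u powr a)"
    using convex_on_sum[OF S powr_convex[OF a], of "\<lambda>_. 1 / N" g] g N by (simp add: N_def)
  then have "((\<Sum>u\<in>S. g u) / N) powr a \<le> (\<Sum>u\<in>S. g u powr a) / N"
    by (simp add: sum_distrib_left[symmetric] sum_divide_distrib[symmetric])
  then have "N powr a * ((\<Sum>u\<in>S. g u) / N) powr a \<le> N powr a * ((\<Sum>u\<in>S. g u powr a) / N)"
    by (rule mult_left_mono) simp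
  then show ?thesis
    using N by (simp add: N_def powr_mult[symmetric] powr_diff)
qed

lemma power_mean:
  fixes g :: "'a \<Rightarrow> real"
  assumes S: "finite S" and g: "\<And>u. u \<in> S \<Longrightarrow> 0 \<le> g u" and a: "1 \<le> a"
  shows "(\<Sum>u\<in>S. g u) powr a \<le> real (card S) powr (a - 1) * (\<Sum>u\<in>S. g u powr a)"
proof -
  define S' where "S' = {u \<in> S. 0 < g u}"
  have S': "finite S'" "S' \<subseteq> S"
    using S by (auto simp: S'_def)
  have sum_eq: "(\<Sum>u\<in>S. g u) = (\<Sum>u\<in>S'. g u)"
    using g by (intro sum.mono_neutral_right[OF S S'(2)]) (force simp: S'_def)
  show ?thesis
  proof (cases "S' = {}")
    case True
    then show ?thesis
      using sum_eq by (simp add: sum_nonneg)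
  next
    case False
    have "(\<Sum>u\<in>S. g u) powr a \<le> real (card S') powr (a - 1) * (\<Sum>u\<in>S'. g u powr a)"
      unfolding sum_eq by (rule power_mean_pos[OF S'(1) False _ a]) (simp add: S'_def)
    also have "\<dots> \<le> real (card S) powr (a - 1) * (\<Sum>u\<in>S. g u powr a)"
      using S S' a by (intro mult_mono powr_mono2 sum_mono2) (auto intro: sum_nonneg card_mono)
    finally show ?thesis .
  qed
qed

lemma blk_phi_has_derivative:
  assumes be: "0 < be" and J: "J \<subseteq> {0<..}" and u: "u \<in> level T k"
    and x: "\<forall>w\<in>level T k. x w \<in> phi be ` J"
    and R: "R = (\<lambda>w. the_inv_into J (phi be) (x w))"
    and defined: "blk_defined lam k R T" and F: "0 < blk lam k R T"
  shows "((\<lambda>t. blk_phi lam k (phi be) J (x(u := t)) T) has_real_derivative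
      dphi be (blk lam k R T) / dphi be (R u) * blk_partial lam k R T u) (at (x u) within phi be ` J)"
proof -
  have inj: "inj_on (phi be) J"
    by (rule inj_on_phi[OF be J])
  have Ru: "R u \<in> J" "x u = phi be (R u)"
    using x u by (auto simp: R the_inv_into_f_f[OF inj])
  then have "0 < R u"
    using J by auto
  then have inv: "phinv be (x u) = R u"
    using Ru(2) phinv_phi[OF be] by simp
  have "((\<lambda>s. blk lam k (R(u := s)) T) has_real_derivative blk_partial lam k R T u) (at (phinv be (x u)))"
    unfolding inv by (rule blk_has_partial_derivative[OF u defined])
  moreover have "(phinv be has_real_derivative 1 / dphi be (R u)) (at (x u))"
    unfolding Ru(2) by (rule phinv_has_derivative[OF be \<open>0 < R u\<close>])
  ultimately have "((\<lambda>t. blk lam k (R(u := phinv be t)) T) has_real_derivative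
      blk_partial lam k R T u * (1 / dphi be (R u))) (at (x u))"
    by (rule DERIV_chain2)
  from DERIV_chain2[OF _ this, of "phi be" "dphi be (blk lam k R T)"]
  have "((\<lambda>t. phi be (blk lam k (R(u := phinv be t)) T)) has_real_derivative
      dphi be (blk lam k R T) / dphi be (R u) * blk_partial lam k R T u) (at (x u))"
    using phi_has_derivative[OF F] inv by (simp add: fun_upd_idem)
  then show ?thesis
  proof (rule has_field_derivative_transform_within[OF has_field_derivative_at_within zero_less_one])
    show "x u \<in> phi be ` J"
      using x u by blast
    fix t assume "t \<in> phi be ` J"
    then obtain r where r: "r \<in> J" "t = phi be r"
      by blast
    then have "the_inv_into J (phi be) t = phinv be t"
      using J phinv_phi[OF be] the_inv_into_f_f[OF inj] by auto
    then have "(\<lambda>w. the_inv_into J (phi be) ((x(u := t)) w)) = R(u := phinv be t)"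
      by (auto simp: R)
    then show "phi be (blk lam k (R(u := phinv be t)) T) = blk_phi lam k (phi be) J (x(u := t)) T"
      by (simp add: blk_phi_def)
  qed
qed

lemma sum_powr_phi_gradient:
  assumes a: "1 < a" and be: "be = 1 - 1 / a"
    and R: "\<forall>u\<in>level T k. 0 < R u" and F: "0 < blk lam k R T"
  shows "(\<Sum>u\<in>level T k. \<bar>dphi be (blk lam k R T) / dphi be (R u) * blk_partial lam k R T u\<bar> powr a)
    = potential lam a k R T / ln_weight a (blk lam k R T)"
  unfolding potential_def sum_divide_distrib
proof (rule sum.cong[OF refl])
  fix u assume "u \<in> level T k"
  then have "0 < R u"
    using R by blast
  moreover have "0 < be"
    using a by (simp add: be)
  ultimately have ratio: "0 \<le> dphi be (blk lam k R T) / dphi be (R u)"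
    using dphi_pos F by (simp add: less_imp_le)
  then have "\<bar>dphi be (blk lam k R T) / dphi be (R u) * blk_partial lam k R T u\<bar> powr a
      = (dphi be (blk lam k R T) / dphi be (R u)) powr a * \<bar>blk_partial lam k R T u\<bar> powr a"
    by (simp only: abs_mult abs_of_nonneg powr_mult)
  then show "\<bar>dphi be (blk lam k R T) / dphi be (R u) * blk_partial lam k R T u\<bar> powr a
      = \<bar>blk_partial lam k R T u\<bar> powr a * ln_weight a (R u) / ln_weight a (blk lam k R T)"
    by (simp add: dphi_ratio_powr[OF a be \<open>0 < R u\<close> F])
qed

lemma blk_phi_gradient_bound:
  assumes a: "1 < a" and be: "be = 1 - 1 / a" and lam: "0 < lam" and K: "0 \<le> K"
    and vertex: "\<And>b. b \<in> {lam / (1 + lam) ^ M..lam} \<Longrightarrow> b powr a * ln (lam / b) \<le> K * ln_weight a b"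
    and T: "branching_le M k T"
    and x: "\<forall>w\<in>level T k. x w \<in> phi be ` {lam / (1 + lam) ^ M..lam}"
  shows "\<exists>D. (\<forall>u\<in>level T k. ((\<lambda>t. blk_phi lam k (phi be) {lam / (1 + lam) ^ M..lam} (x(u := t)) T)
              has_real_derivative D u) (at (x u) within phi be ` {lam / (1 + lam) ^ M..lam}))
           \<and> (\<Sum>u\<in>level T k. \<bar>D u\<bar>) powr a \<le> real (card (level T k)) powr (a - 1) * K ^ k"
proof -
  define J where "J = {lam / (1 + lam) ^ M..lam}"
  define R where "R = (\<lambda>w. the_inv_into J (phi be) (x w))"
  define D where "D u = dphi be (blk lam k R T) / dphi be (R u) * blk_partial lam k R T u" for u
  have "0 < lam / (1 + lam) ^ M"
    using lam by simp
  then have J: "J \<subseteq> {0<..}"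
    by (auto simp: J_def)
  have be0: "0 < be"
    using a by (simp add: be)
  have R: "R u \<in> J" if "u \<in> level T k" for u
    using x that inj_on_phi[OF be0 J] by (auto simp: R_def J_def the_inv_into_f_f)
  then have "blk_defined lam k R T \<and> blk lam k R T \<in> J"
    unfolding J_def using blk_maps_interval[OF less_imp_le[OF lam] T] by blast
  then have defined: "blk_defined lam k R T" and F: "0 < blk lam k R T"
    using J by auto
  have deriv: "((\<lambda>t. blk_phi lam k (phi be) J (x(u := t)) T) has_real_derivative D u)
      (at (x u) within phi be ` J)" if "u \<in> level T k" for u
    unfolding D_def using x that defined F by (intro blk_phi_has_derivative[OF be0 J _ _ R_def]) (auto simp: J_def)
  have "potential lam a k R T \<le> K ^ k * ln_weight a (blk lam k R T)"
    using R by (intro potential_le[OF lam K vertex T]) (auto simp: J_def)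
  then have "(\<Sum>u\<in>level T k. \<bar>D u\<bar> powr a) \<le> K ^ k"
    using sum_powr_phi_gradient[OF a be _ F] R J F
    by (auto simp: D_def divide_le_eq ln_weight_def subset_eq)
  then have "real (card (level T k)) powr (a - 1) * (\<Sum>u\<in>level T k. \<bar>D u\<bar> powr a)
      \<le> real (card (level T k)) powr (a - 1) * K ^ k"
    by (rule mult_left_mono) simp
  with power_mean[OF finite_level[of T k], of "\<lambda>u. \<bar>D u\<bar>" a] a
  have "(\<Sum>u\<in>level T k. \<bar>D u\<bar>) powr a \<le> real (card (level T k)) powr (a - 1) * K ^ k"
    by simp
  with deriv show ?thesis
    unfolding J_def by blast
qed

lemma tree_class_blk_phi_gradient_le:
  assumes k: "k \<ge> 1" and d: "d > 1" and lam: "0 < lam" and a: "1 < a" and be: "be = 1 - 1 / a"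
    and c: "0 \<le> c" "c \<le> 1" and lo: "lo = lam / (1 + lam) ^ nat \<lfloor>d ^ k\<rfloor>"
    and vertex: "\<And>b. b \<in> {lo..lam} \<Longrightarrow> b powr a * ln (lam / b) \<le> c * d powr (1 - a) * ln_weight a b"
    and T: "T \<in> tree_class k d" and x: "\<forall>u\<in>level T k. x u \<in> phi be ` {lo..lam}"
  shows "\<exists>D. (\<forall>u\<in>level T k. ((\<lambda>t. blk_phi lam k (phi be) {lo..lam} (x(u := t)) T)
        has_real_derivative D u) (at (x u) within phi be ` {lo..lam}))
      \<and> (\<Sum>u\<in>level T k. \<bar>D u\<bar>) \<le> c powr (1 / a)"
proof -
  have "0 \<le> c * d powr (1 - a)"
    using c by simp
  from blk_phi_gradient_bound[OF a be lam this vertex[unfolded lo] tree_class_branching_le[OF k _ T] x[unfolded lo]] d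
  obtain D where deriv: "\<forall>u\<in>level T k. ((\<lambda>t. blk_phi lam k (phi be) {lo..lam} (x(u := t)) T)
        has_real_derivative D u) (at (x u) within phi be ` {lo..lam})"
    and bound: "(\<Sum>u\<in>level T k. \<bar>D u\<bar>) powr a
      \<le> real (card (level T k)) powr (a - 1) * (c * d powr (1 - a)) ^ k"
    unfolding lo by auto
  note bound
  also have "\<dots> \<le> (d ^ k) powr (a - 1) * (c * d powr (1 - a)) ^ k"
    using tree_class_card_level_le[OF k _ T] d a c by (intro mult_right_mono powr_mono2) auto
  also have "\<dots> = c ^ k"
    using d by (simp add: power_mult_distrib powr_realpow[symmetric] powr_powr powr_add[symmetric]
        algebra_simps flip: powr_mult)
  also have "\<dots> \<le> c"
    using power_decreasing[of 1 k c] c k by simp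
  finally have "((\<Sum>u\<in>level T k. \<bar>D u\<bar>) powr a) powr (1 / a) \<le> c powr (1 / a)"
    using a by (intro powr_mono2) auto
  then have "(\<Sum>u\<in>level T k. \<bar>D u\<bar>) \<le> c powr (1 / a)"
    using a by (simp add: powr_powr sum_nonneg)
  with deriv show ?thesis
    by blast
qed

lemma real_block_contraction_pos:
  assumes k: "k \<ge> 1" and d: "d > 1" and lam: "0 < lam" "lam < lambda_c d"
  shows "real_block_contraction lam k d"
proof -
  define a where "a = contraction_exponent d"
  define be where "be = 1 - 1 / a"
  define lo where "lo = lam / (1 + lam) ^ nat \<lfloor>d ^ k\<rfloor>"
  have a: "2 < a"
    using contraction_exponent_gt_2[OF d] by (simp add: a_def)
  then have be: "0 < be"
    by (simp add: be_def)
  have lo: "0 < lo" "lo \<le> lam"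
    using lam by (auto simp: lo_def divide_le_eq one_le_power mult_le_cancel_left1)
  obtain c where c: "0 < c" "c < 1"
    and vertex: "\<And>b. b \<in> {lo..lam} \<Longrightarrow> b powr a * ln (lam / b) \<le> c * d powr (1 - a) * ln_weight a b"
    using vertex_inequality[OF d lam lo] unfolding a_def by blast
  show ?thesis
    unfolding real_block_contraction_def
  proof (rule exI[of _ lo], rule exI[of _ lam], rule exI[of _ "phi be"], intro conjI exI[of _ "1 - c powr (1 / a)"])
    show "lo \<le> lam" "lam \<in> {lo..lam}" "- 1 \<notin> {lo..lam}"
      using lo by auto
    show "real_analytic_on (phi be) {lo..lam}" "inj_on (phi be) {lo..lam}"
      "\<forall>x\<in>{lo..lam}. deriv (phi be) x \<noteq> 0"
      using lo be by (auto intro!: real_analytic_on_phi inj_on_phi deriv_phi_nonzero[OF be])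
    show "\<forall>T\<in>tree_class k d. \<forall>R. (\<forall>u\<in>level T k. R u \<in> {lo..lam}) \<longrightarrow>
        blk_defined lam k R T \<and> blk lam k R T \<in> {lo..lam}"
      using blk_maps_interval[OF less_imp_le[OF lam(1)] tree_class_branching_le[OF k]] d
      unfolding lo_def by (meson less_trans zero_less_one)
    show "0 < 1 - c powr (1 / a)"
      using c a powr_less_mono2[of "1 / a" c 1] by simp
  qed (use tree_class_blk_phi_gradient_le[OF k d lam(1) _ be_def _ _ lo_def vertex] a c in auto)
qed

lemma real_block_contraction_zero:
  assumes k: "k \<ge> 1" and d: "d > 0"
  shows "real_block_contraction 0 k d"
  unfolding real_block_contraction_def
proof (rule exI[of _ 0], rule exI[of _ 0], rule exI[of _ id], intro conjI exI[of _ "1 / 2"])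
  show "real_analytic_on id {0..0}"
    by (rule real_analytic_on_id)
  show "\<forall>x\<in>{0..0}. deriv id x \<noteq> (0::real)"
    by (simp add: DERIV_imp_deriv[OF DERIV_ident, unfolded id_def[symmetric]])
  show "\<forall>T\<in>tree_class k d. \<forall>R. (\<forall>u\<in>level T k. R u \<in> {0..0}) \<longrightarrow> blk_defined 0 k R T \<and> blk 0 k R T \<in> {0..0}"
    using blk_maps_interval[of 0 "nat \<lfloor>d ^ k\<rfloor>" k, OF _ tree_class_branching_le[OF k d]] by simp
  obtain j where "k = Suc j"
    using k by (cases k) auto
  then show "\<forall>T\<in>tree_class k d. \<forall>x. (\<forall>u\<in>level T k. x u \<in> id ` {0..0}) \<longrightarrow>
      (\<exists>D. (\<forall>u\<in>level T k. ((\<lambda>t. blk_phi 0 k id {0..0} (x(u := t)) T) has_real_derivative D u)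
        (at (x u) within id ` {0..0})) \<and> (\<Sum>u\<in>level T k. \<bar>D u\<bar>) \<le> 1 - 1 / 2)"
    by (intro ballI allI impI exI[of _ "\<lambda>_. 0"]) (simp add: blk_phi_def blk_zero_Suc)
qed auto

theorem lemma4p1:
  fixes k :: nat and d lam :: real
  assumes "k \<ge> 1" and "d > 1" and "0 \<le> lam" and "lam < lambda_c d"
  shows "real_block_contraction lam k d"
proof (cases "lam = 0")
  case True
  with assms show ?thesis
    using real_block_contraction_zero by simp
next
  case False
  with assms show ?thesis
    using real_block_contraction_pos by simp
qed

end
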